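(* Let $\kappa>0$ and define $g:\mathbb{R}\to\mathbb{R}$ by $g(t)=\sqrt{1-\kappa t^2}$ if $0\leq t<\sqrt{1/(3\kappa)}$, $g(t)=\frac{1}{3\sqrt{2\kappa}\,t}+\sqrt{\frac16}$ if $t\geq\sqrt{1/(3\kappa)}$, and $g(t)=g(-t)$ for $t<0$. Let $G(t)=\int_0^t g(s)\,ds$ and let $G^{-1}$ denote its inverse function. Then: (1) $\lim_{t\to0}\frac{G^{-1}(t)}{t}=1$; (2) $\lim_{t\to\infty}\frac{G^{-1}(t)}{t}=\sqrt6$; (3) $t\leq G^{-1}(t)\leq\sqrt6\,t$ for all $t\geq0$; (4) $-\frac12\leq \frac{t}{g(t)}g'(t)\leq 0$ for all $t\geq 0$.
   Context: The function $g$ is $C^1$, even, takes values in $(\sqrt{1/6},1]$, and $G$ is a strictly increasing odd $C^2$ bijection of $\mathbb{R}$. *)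

theory Defs
  imports "HOL-Analysis.Analysis"
begin

definition gfun :: "real \<Rightarrow> real \<Rightarrow> real" where
  "gfun \<kappa> t = (let s = \<bar>t\<bar> in
     if s < sqrt (1 / (3 * \<kappa>)) then sqrt (1 - \<kappa> * s\<^sup>2)
     else 1 / (3 * sqrt (2 * \<kappa>) * s) + sqrt (1 / 6))"

definition Gfun :: "real \<Rightarrow> real \<Rightarrow> real" where
  "Gfun \<kappa> t = (if 0 \<le> t then integral {0..t} (gfun \<kappa>)
                 else - integral {t..0} (gfun \<kappa>))"

end

theory Submission
  imports Defs
begin

(*
  G is an antiderivative of g with sqrt(1/6) <= g <= 1, g(0) = 1 and g(t) -> sqrt(1/6) as
  t -> oo.  These slope bounds make G a strictly increasing bijection with
  sqrt(1/6) t <= G(t) <= t for t >= 0, which inverts to (3); (1) is the inverse function rule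
  (G^-1)'(0) = 1/g(0), and (2) follows from G(t)/t -> sqrt(1/6) by l'Hopital's rule.
  For (4), t g'(t)/g(t) equals -k t^2/(1 - k t^2) with k t^2 <= 1/3 on the first branch and
  -w/(w + sqrt(1/6)) with 0 < w = 1/(3 sqrt(2k) t) <= sqrt(1/6) on the second; the two
  branches agree to first order at the kink sqrt(1/(3k)), so g is differentiable there.
*)

definition signed_integral :: "(real \<Rightarrow> real) \<Rightarrow> real \<Rightarrow> real" where
  "signed_integral f t = (if 0 \<le> t then integral {0..t} f else - integral {t..0} f)"

lemma signed_integral_diff:
  assumes "continuous_on UNIV f" "a \<le> b"
  shows "signed_integral f b - signed_integral f a = integral {a..b} f"
proof -
  have int: "f integrable_on {x..y}" for x y
    using assms(1) by (intro integrable_continuous_interval) (auto intro: continuous_on_subset)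
  consider "0 \<le> a" | "b < 0" | "a < 0" "0 \<le> b" by linarith
  then show ?thesis
  proof cases
    case 1
    have "integral {0..a} f + integral {a..b} f = integral {0..b} f"
      using 1 assms(2) by (intro Henstock_Kurzweil_Integration.integral_combine int) auto
    then show ?thesis using 1 assms(2) by (simp add: signed_integral_def)
  next
    case 2
    have "integral {a..b} f + integral {b..0} f = integral {a..0} f"
      using 2 assms(2) by (intro Henstock_Kurzweil_Integration.integral_combine int) auto
    then show ?thesis using 2 assms(2) by (simp add: signed_integral_def)
  next
    case 3
    have "integral {a..0} f + integral {0..b} f = integral {a..b} f"
      using 3 by (intro Henstock_Kurzweil_Integration.integral_combine int) auto
    then show ?thesis using 3 by (simp add: signed_integral_def)
  qed
qed

lemma signed_integral_has_real_derivative: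
  assumes "continuous_on UNIV f"
  shows "(signed_integral f has_real_derivative f x) (at x)"
proof -
  have "((\<lambda>u. integral {x-1..u} f) has_real_derivative f x) (at x within {x-1..x+1})"
    using assms by (intro integral_has_real_derivative) (auto intro: continuous_on_subset)
  then have "((\<lambda>u. signed_integral f (x-1) + integral {x-1..u} f) has_real_derivative f x) (at x)"
    by (auto simp: at_within_Icc_at intro!: derivative_eq_intros)
  then show ?thesis
  proof (rule has_field_derivative_transform_within_open[where S = "{x-1<..<x+1}"])
    fix u assume "u \<in> {x-1<..<x+1}"
    then show "signed_integral f (x-1) + integral {x-1..u} f = signed_integral f u"
      using signed_integral_diff[OF assms, of "x-1" u] by simp
  qed auto
qed

lemma has_real_derivative_glue:
  assumes "(f\<^sub>1 has_real_derivative D) (at c)" and "(f\<^sub>2 has_real_derivative D) (at c)"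
    and "0 < d"
    and "\<And>x. c - d < x \<Longrightarrow> x \<le> c \<Longrightarrow> f x = f\<^sub>1 x"
    and "\<And>x. c \<le> x \<Longrightarrow> x < c + d \<Longrightarrow> f x = f\<^sub>2 x"
  shows "(f has_real_derivative D) (at c)"
proof -
  have "(f has_real_derivative D) (at c within {..c})"
    by (rule has_field_derivative_transform_within[OF has_field_derivative_at_within[OF assms(1)]
          assms(3)]) (auto simp: assms(4) dist_real_def)
  moreover have "(f has_real_derivative D) (at c within {c..})"
    by (rule has_field_derivative_transform_within[OF has_field_derivative_at_within[OF assms(2)]
          assms(3)]) (auto simp: assms(5) dist_real_def)
  ultimately have "(f has_real_derivative D) (at c within {..c} \<union> {c..})"
    unfolding has_field_derivative_iff Lim_within_Un by blast
  moreover have "{..c} \<union> {c..} = (UNIV :: real set)" by auto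
  ultimately show ?thesis by simp
qed

locale bounded_slope_antiderivative =
  fixes G g :: "real \<Rightarrow> real" and m :: real
  assumes has_derivative: "\<And>x. (G has_real_derivative g x) (at x)"
    and G_0: "G 0 = 0"
    and m_pos: "0 < m"
    and slope_lower: "\<And>x. m \<le> g x"
    and slope_upper: "\<And>x. g x \<le> 1"
begin

lemma G_increment_bounds:
  assumes "a \<le> b"
  shows "m * (b - a) \<le> G b - G a \<and> G b - G a \<le> b - a"
proof (cases "a = b")
  case False
  then obtain z where "G b - G a = (b - a) * g z"
    using MVT2[of a b G g] has_derivative assms by force
  moreover have "m * (b - a) \<le> (b - a) * g z"
    using assms slope_lower[of z] by (simp add: mult.commute mult_right_mono)
  moreover have "(b - a) * g z \<le> b - a"
    using assms slope_upper[of z] by (simp add: mult_left_le)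
  ultimately show ?thesis by simp
qed simp

lemma G_strict_mono: "strict_mono G"
proof
  fix a b :: real assume "a < b"
  then have "0 < m * (b - a)" using m_pos by simp
  then show "G a < G b" using G_increment_bounds[of a b] \<open>a < b\<close> by linarith
qed

lemma G_surj: "surj G"
proof -
  have cont: "continuous_on S G" for S
    using has_derivative by (meson DERIV_isCont continuous_at_imp_continuous_on)
  have "\<exists>x. G x = y" for y
  proof (cases "0 \<le> y")
    case True
    then have "y \<le> G (y / m)" using G_increment_bounds[of 0 "y / m"] m_pos G_0 by simp
    then show ?thesis using IVT'[of G 0 y "y / m"] True G_0 cont m_pos by auto
  next
    case False
    then have "G (y / m) \<le> y"
      using G_increment_bounds[of "y / m" 0] m_pos G_0 by (simp add: divide_nonpos_pos)
    then show ?thesis using IVT'[of G "y / m" y 0] False G_0 cont m_pos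
      by (auto simp: divide_nonpos_pos)
  qed
  then show ?thesis by (metis surjI)
qed

lemma inv_G: "inv G (G x) = x"
  using G_strict_mono by (simp add: strict_mono_imp_inj_on inv_f_f)

lemma G_inv: "G (inv G y) = y"
  using G_surj by (simp add: surj_f_inv_f)

lemma inv_G_bounds:
  assumes "0 \<le> t"
  shows "t \<le> inv G t \<and> inv G t \<le> t / m"
proof -
  have "0 \<le> inv G t"
    using assms G_0 G_inv G_strict_mono by (metis not_le strict_mono_less)
  then show ?thesis
    using G_increment_bounds[of 0 "inv G t"] G_0 G_inv m_pos by (simp add: field_simps)
qed

lemma inv_ratio_at_0: "((\<lambda>t. inv G t / t) \<longlongrightarrow> 1 / g 0) (at 0)"
proof -
  have inv_0: "inv G 0 = 0"
    using inv_G[of 0] G_0 by simp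
  have "isCont (inv G) (G 0)"
    by (rule isCont_inverse_function[where d = 1]) (auto simp: inv_G intro: DERIV_isCont has_derivative)
  then have "DERIV (inv G) 0 :> inverse (g (inv G 0))"
    using has_derivative[of "inv G 0"] slope_lower[of "inv G 0"] m_pos G_0
    by (intro DERIV_inverse_function[where a = "-1" and b = 1]) (auto simp: G_inv)
  then show ?thesis
    unfolding DERIV_def using inv_0 by (simp add: inverse_eq_divide)
qed

lemma inv_ratio_at_top:
  assumes lim: "(g \<longlongrightarrow> l) at_top"
  shows "((\<lambda>t. inv G t / t) \<longlongrightarrow> 1 / l) at_top"
proof -
  have "m \<le> l"
    using tendsto_lowerbound[OF lim always_eventually[OF allI[OF slope_lower]]] by simp
  have "((\<lambda>x. G x / x) \<longlongrightarrow> l) at_top"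
  proof (rule lhospital_at_top_at_top[where f' = g and g' = "\<lambda>_. 1"])
    show "((\<lambda>x. g x / 1) \<longlongrightarrow> l) at_top"
      using lim by simp
  qed (auto intro!: filterlim_ident always_eventually has_derivative DERIV_ident)
  then have "((\<lambda>x. inverse (G x / x)) \<longlongrightarrow> inverse l) at_top"
    using \<open>m \<le> l\<close> m_pos by (intro tendsto_inverse) auto
  then have "((\<lambda>x. x / G x) \<longlongrightarrow> 1 / l) at_top"
    by (simp add: inverse_eq_divide)
  moreover have "filterlim (inv G) at_top at_top"
    using inv_G_bounds
    by (intro filterlim_at_top_mono[OF filterlim_ident] eventually_at_top_linorderI[of 0]) auto
  ultimately have "((\<lambda>t. inv G t / G (inv G t)) \<longlongrightarrow> 1 / l) at_top"
    by (rule filterlim_compose)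
  then show ?thesis
    by (simp add: G_inv)
qed

end

definition kink :: "real \<Rightarrow> real" where
  "kink \<kappa> = sqrt (1 / (3 * \<kappa>))"

definition tail_coeff :: "real \<Rightarrow> real" where
  "tail_coeff \<kappa> = 3 * sqrt (2 * \<kappa>)"

context
  fixes \<kappa> :: real
  assumes \<kappa>_pos: "0 < \<kappa>"
begin

lemma kink_pos: "0 < kink \<kappa>"
  using \<kappa>_pos by (simp add: kink_def)

lemma tail_coeff_pos: "0 < tail_coeff \<kappa>"
  using \<kappa>_pos by (simp add: tail_coeff_def)

lemma kappa_kink_square: "\<kappa> * (kink \<kappa>)\<^sup>2 = 1 / 3"
  using \<kappa>_pos by (simp add: kink_def)

lemma tail_coeff_kink: "tail_coeff \<kappa> * kink \<kappa> = sqrt 6"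
proof -
  have "(tail_coeff \<kappa> * kink \<kappa>)\<^sup>2 = 6"
    using \<kappa>_pos by (simp add: tail_coeff_def kink_def power_mult_distrib)
  then show ?thesis
    using tail_coeff_pos kink_pos by (simp add: real_sqrt_unique)
qed

lemma core_at_kink: "sqrt (1 - \<kappa> * (kink \<kappa>)\<^sup>2) = 2 * sqrt (1 / 6)"
  by (rule real_sqrt_unique) (simp_all add: kappa_kink_square power_mult_distrib)

lemma tail_at_kink: "1 / (tail_coeff \<kappa> * kink \<kappa>) + sqrt (1 / 6) = 2 * sqrt (1 / 6)"
  by (simp add: tail_coeff_kink real_sqrt_divide)

lemma branch_derivatives_agree_at_kink:
  "- (\<kappa> * kink \<kappa>) / sqrt (1 - \<kappa> * (kink \<kappa>)\<^sup>2) = - 1 / (tail_coeff \<kappa> * (kink \<kappa>)\<^sup>2)"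
proof -
  have "\<kappa> * kink \<kappa> = 1 / (3 * kink \<kappa>)"
    using kappa_kink_square kink_pos by (simp add: power2_eq_square field_simps)
  moreover have "tail_coeff \<kappa> * (kink \<kappa>)\<^sup>2 = sqrt 6 * kink \<kappa>"
    using tail_coeff_kink by (simp add: power2_eq_square mult.assoc[symmetric])
  moreover have "- (1 / (3 * k)) / (2 * sqrt (1 / 6)) = - 1 / (sqrt 6 * k)" if "0 < k" for k :: real
  proof -
    have "sqrt 6 * sqrt 6 = (6 :: real)" by simp
    then show ?thesis using that by (simp add: real_sqrt_divide field_simps)
  qed
  ultimately show ?thesis
    using kink_pos by (simp add: core_at_kink)
qed

lemma kink_square_bound:
  assumes "\<bar>t\<bar> \<le> kink \<kappa>"
  shows "\<kappa> * t\<^sup>2 \<le> 1 / 3"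
proof -
  have "t\<^sup>2 \<le> (kink \<kappa>)\<^sup>2"
    using power_mono[OF assms abs_ge_zero, of 2] by simp
  then have "\<kappa> * t\<^sup>2 \<le> \<kappa> * (kink \<kappa>)\<^sup>2"
    using \<kappa>_pos by simp
  then show ?thesis
    using kappa_kink_square by simp
qed

lemma tail_term_bounds:
  assumes "kink \<kappa> \<le> t"
  shows "0 < 1 / (tail_coeff \<kappa> * t) \<and> 1 / (tail_coeff \<kappa> * t) \<le> sqrt (1 / 6)"
proof -
  have "0 < t" using assms kink_pos by linarith
  have "tail_coeff \<kappa> * kink \<kappa> \<le> tail_coeff \<kappa> * t"
    using assms tail_coeff_pos by simp
  then have "1 / (tail_coeff \<kappa> * t) \<le> 1 / (tail_coeff \<kappa> * kink \<kappa>)"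
    using tail_coeff_pos kink_pos by (simp add: frac_le)
  also have "\<dots> = sqrt (1 / 6)"
    by (simp add: tail_coeff_kink real_sqrt_divide)
  finally show ?thesis
    using \<open>0 < t\<close> tail_coeff_pos by simp
qed

lemma gfun_cases: "gfun \<kappa> t = (if \<bar>t\<bar> \<le> kink \<kappa> then sqrt (1 - \<kappa> * t\<^sup>2)
    else 1 / (tail_coeff \<kappa> * \<bar>t\<bar>) + sqrt (1 / 6))"
proof (cases "\<bar>t\<bar> = kink \<kappa>")
  case True
  then have "t\<^sup>2 = (kink \<kappa>)\<^sup>2" by (metis power2_abs)
  then show ?thesis
    using True core_at_kink tail_at_kink
    by (simp add: gfun_def Let_def kink_def[symmetric] tail_coeff_def[symmetric])
qed (auto simp: gfun_def Let_def kink_def[symmetric] tail_coeff_def[symmetric])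

lemma gfun_core: "\<bar>t\<bar> \<le> kink \<kappa> \<Longrightarrow> gfun \<kappa> t = sqrt (1 - \<kappa> * t\<^sup>2)"
  by (simp add: gfun_cases)

lemma gfun_tail:
  assumes "kink \<kappa> \<le> t"
  shows "gfun \<kappa> t = 1 / (tail_coeff \<kappa> * t) + sqrt (1 / 6)"
proof (cases "t = kink \<kappa>")
  case True
  then show ?thesis
    using kink_pos by (simp add: gfun_core core_at_kink tail_at_kink)
next
  case False
  then show ?thesis
    using assms kink_pos by (simp add: gfun_cases)
qed

lemma gfun_bounds: "sqrt (1 / 6) \<le> gfun \<kappa> t \<and> gfun \<kappa> t \<le> 1"
proof (cases "\<bar>t\<bar> \<le> kink \<kappa>")
  case True
  then show ?thesis
    using kink_square_bound[OF True] \<kappa>_pos by (simp add: gfun_core)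
next
  case False
  have "sqrt (1 - \<kappa> * (kink \<kappa>)\<^sup>2) \<le> 1"
    using \<kappa>_pos by simp
  then have "2 * sqrt (1 / 6) \<le> (1 :: real)"
    by (simp only: core_at_kink)
  then show ?thesis
    using False tail_term_bounds[of "\<bar>t\<bar>"] by (simp add: gfun_cases)
qed

lemma gfun_0: "gfun \<kappa> 0 = 1"
  using kink_pos by (simp add: gfun_core)

lemma continuous_gfun: "continuous_on UNIV (gfun \<kappa>)"
proof -
  have "sqrt (1 - \<kappa> * t\<^sup>2) = 1 / (tail_coeff \<kappa> * \<bar>t\<bar>) + sqrt (1 / 6)"
    if "\<bar>t\<bar> = kink \<kappa>" for t
    using that core_at_kink tail_at_kink by (metis power2_abs)
  then have "continuous_on UNIV (\<lambda>t. if \<bar>t\<bar> \<le> kink \<kappa> then sqrt (1 - \<kappa> * t\<^sup>2)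
      else 1 / (tail_coeff \<kappa> * \<bar>t\<bar>) + sqrt (1 / 6))"
    using kink_pos tail_coeff_pos by (intro continuous_on_cases_le continuous_intros) auto
  then show ?thesis
    by (simp add: gfun_cases[abs_def])
qed

lemma gfun_tendsto_at_top: "(gfun \<kappa> \<longlongrightarrow> sqrt (1 / 6)) at_top"
proof -
  have "filterlim (\<lambda>t. tail_coeff \<kappa> * t) at_top at_top"
    by (rule filterlim_tendsto_pos_mult_at_top[OF tendsto_const tail_coeff_pos filterlim_ident])
  then have "((\<lambda>t. 1 / (tail_coeff \<kappa> * t)) \<longlongrightarrow> 0) at_top"
    by (intro tendsto_divide_0[OF tendsto_const] filterlim_at_top_imp_at_infinity)
  then have "((\<lambda>t. 1 / (tail_coeff \<kappa> * t) + sqrt (1 / 6)) \<longlongrightarrow> sqrt (1 / 6)) at_top"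
    using tendsto_add[OF _ tendsto_const, of _ 0 _ "sqrt (1 / 6)"] by simp
  moreover have "eventually (\<lambda>t. 1 / (tail_coeff \<kappa> * t) + sqrt (1 / 6) = gfun \<kappa> t) at_top"
    by (intro eventually_at_top_linorderI[of "kink \<kappa>"]) (simp add: gfun_tail)
  ultimately show ?thesis
    by (rule Lim_transform_eventually)
qed

lemma core_has_real_derivative:
  assumes "\<kappa> * s\<^sup>2 < 1"
  shows "((\<lambda>s. sqrt (1 - \<kappa> * s\<^sup>2)) has_real_derivative - (\<kappa> * s) / sqrt (1 - \<kappa> * s\<^sup>2)) (at s)"
  using assms by (auto intro!: derivative_eq_intros simp: field_simps)

lemma tail_has_real_derivative:
  assumes "0 < s"
  shows "((\<lambda>s. 1 / (tail_coeff \<kappa> * s) + sqrt (1 / 6)) has_real_derivative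
      - 1 / (tail_coeff \<kappa> * s\<^sup>2)) (at s)"
  using assms tail_coeff_pos by (auto intro!: derivative_eq_intros simp: field_simps power2_eq_square)

lemma gfun_has_real_derivative:
  assumes "0 \<le> t"
  shows "(gfun \<kappa> has_real_derivative (if t < kink \<kappa> then - (\<kappa> * t) / sqrt (1 - \<kappa> * t\<^sup>2)
    else - 1 / (tail_coeff \<kappa> * t\<^sup>2))) (at t)"
proof -
  consider "t < kink \<kappa>" | "t = kink \<kappa>" | "kink \<kappa> < t" by linarith
  then show ?thesis
  proof cases
    case 1
    have "\<kappa> * t\<^sup>2 < 1"
      using 1 assms kink_square_bound[of t] by simp
    then have "(gfun \<kappa> has_real_derivative - (\<kappa> * t) / sqrt (1 - \<kappa> * t\<^sup>2)) (at t)"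
    proof (rule has_field_derivative_transform_within_open[OF core_has_real_derivative])
      show "t \<in> {- kink \<kappa> <..< kink \<kappa>}" using 1 assms by simp
      show "sqrt (1 - \<kappa> * s\<^sup>2) = gfun \<kappa> s" if "s \<in> {- kink \<kappa> <..< kink \<kappa>}" for s
        using that by (subst gfun_core) auto
    qed simp
    then show ?thesis using 1 by simp
  next
    case 2
    have "\<kappa> * t\<^sup>2 < 1"
      using 2 kappa_kink_square by simp
    have "(gfun \<kappa> has_real_derivative - 1 / (tail_coeff \<kappa> * t\<^sup>2)) (at t)"
    proof (rule has_real_derivative_glue)
      show "((\<lambda>s. sqrt (1 - \<kappa> * s\<^sup>2)) has_real_derivative - 1 / (tail_coeff \<kappa> * t\<^sup>2)) (at t)"
        using core_has_real_derivative[OF \<open>\<kappa> * t\<^sup>2 < 1\<close>] 2 branch_derivatives_agree_at_kink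
        by simp
      show "((\<lambda>s. 1 / (tail_coeff \<kappa> * s) + sqrt (1 / 6)) has_real_derivative
          - 1 / (tail_coeff \<kappa> * t\<^sup>2)) (at t)"
        using 2 kink_pos by (intro tail_has_real_derivative) simp
      show "gfun \<kappa> s = sqrt (1 - \<kappa> * s\<^sup>2)" if "t - kink \<kappa> < s" "s \<le> t" for s
        using that 2 by (simp add: gfun_core)
      show "gfun \<kappa> s = 1 / (tail_coeff \<kappa> * s) + sqrt (1 / 6)" if "t \<le> s" for s
        using that 2 by (simp add: gfun_tail)
    qed (rule kink_pos)
    then show ?thesis using 2 by simp
  next
    case 3
    have "(gfun \<kappa> has_real_derivative - 1 / (tail_coeff \<kappa> * t\<^sup>2)) (at t)"
    proof (rule has_field_derivative_transform_within_open[OF tail_has_real_derivative])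
      show "0 < t" "t \<in> {kink \<kappa> <..}" using 3 kink_pos by simp_all
      show "1 / (tail_coeff \<kappa> * s) + sqrt (1 / 6) = gfun \<kappa> s" if "s \<in> {kink \<kappa> <..}" for s
        using that by (simp add: gfun_tail)
    qed simp
    then show ?thesis using 3 by simp
  qed
qed

lemma gfun_log_derivative_bounds:
  assumes "0 \<le> t"
  shows "- 1 / 2 \<le> t / gfun \<kappa> t * deriv (gfun \<kappa>) t \<and> t / gfun \<kappa> t * deriv (gfun \<kappa>) t \<le> 0"
proof (cases "t < kink \<kappa>")
  case True
  define u where "u = \<kappa> * t\<^sup>2"
  have u: "0 \<le> u" "u \<le> 1 / 3"
    using True assms \<kappa>_pos kink_square_bound[of t] by (simp_all add: u_def)
  have "t / gfun \<kappa> t * deriv (gfun \<kappa>) t = - u / (1 - u)"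
    using True assms u DERIV_imp_deriv[OF gfun_has_real_derivative[OF assms]]
    by (simp add: gfun_core u_def power2_eq_square)
  then show ?thesis
    using u by (simp add: divide_le_eq le_divide_eq)
next
  case False
  define w where "w = 1 / (tail_coeff \<kappa> * t)"
  have w: "0 < w" "w \<le> sqrt (1 / 6)"
    using False tail_term_bounds[of t] by (simp_all add: w_def)
  have "t / gfun \<kappa> t * deriv (gfun \<kappa>) t = - w / (w + sqrt (1 / 6))"
    using False kink_pos tail_coeff_pos DERIV_imp_deriv[OF gfun_has_real_derivative[OF assms]]
    by (simp add: gfun_tail w_def power2_eq_square field_simps)
  then show ?thesis
    using w by (simp add: divide_le_eq le_divide_eq)
qed

lemma Gfun_bounded_slope_antiderivative:
  "bounded_slope_antiderivative (Gfun \<kappa>) (gfun \<kappa>) (sqrt (1 / 6))"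
proof
  have "Gfun \<kappa> = signed_integral (gfun \<kappa>)"
    by (simp add: fun_eq_iff Gfun_def signed_integral_def)
  then show "(Gfun \<kappa> has_real_derivative gfun \<kappa> x) (at x)" for x
    using signed_integral_has_real_derivative[OF continuous_gfun] by simp
  show "Gfun \<kappa> 0 = 0"
    by (simp add: Gfun_def)
  show "sqrt (1 / 6) \<le> gfun \<kappa> x" "gfun \<kappa> x \<le> 1" for x
    using gfun_bounds[of x] by simp_all
qed simp

end

theorem lemma2p1:
  fixes \<kappa> :: real
  assumes "\<kappa> > 0"
  shows "(((\<lambda>t. inv (Gfun \<kappa>) t / t) \<longlongrightarrow> 1) (at 0))
    \<and> (((\<lambda>t. inv (Gfun \<kappa>) t / t) \<longlongrightarrow> sqrt 6) at_top)
    \<and> (\<forall>t\<ge>0. t \<le> inv (Gfun \<kappa>) t \<and> inv (Gfun \<kappa>) t \<le> sqrt 6 * t)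
    \<and> (\<forall>t\<ge>0. - 1 / 2 \<le> t / gfun \<kappa> t * deriv (gfun \<kappa>) t
              \<and> t / gfun \<kappa> t * deriv (gfun \<kappa>) t \<le> 0)"
proof -
  interpret bounded_slope_antiderivative "Gfun \<kappa>" "gfun \<kappa>" "sqrt (1 / 6)"
    using assms by (rule Gfun_bounded_slope_antiderivative)
  have sqrt_6: "t / sqrt (1 / 6) = sqrt 6 * t" for t :: real
    by (simp add: real_sqrt_divide)
  have "((\<lambda>t. inv (Gfun \<kappa>) t / t) \<longlongrightarrow> 1) (at 0)"
    using inv_ratio_at_0 by (simp add: gfun_0[OF assms])
  moreover have "((\<lambda>t. inv (Gfun \<kappa>) t / t) \<longlongrightarrow> sqrt 6) at_top"
    using inv_ratio_at_top[OF gfun_tendsto_at_top[OF assms]] by (simp add: sqrt_6[of 1])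
  moreover have "\<forall>t\<ge>0. t \<le> inv (Gfun \<kappa>) t \<and> inv (Gfun \<kappa>) t \<le> sqrt 6 * t"
    using inv_G_bounds by (simp add: sqrt_6)
  ultimately show ?thesis
    using gfun_log_derivative_bounds[OF assms] by blast
qed

end
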